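(* There is an absolute constant $c>0$ such that for every finite simple graph $G=(V,E)$ with maximum degree $d\ge 1$, there is an injective placement of the vertices of $G$ on the unit sphere in $\mathbb{R}^3$ such that, drawing each edge as the straight-line segment between its endpoints, any two distinct edges sharing a common endpoint form an angle of at least $c/d$ at that endpoint (i.e., the 3D straight-line drawing has angular resolution $\Omega(1/d)$).
   Context: The angle between two segments sharing an endpoint is the angle in $[0,\pi]$ between the corresponding rays from that endpoint. The angular resolution of a drawing is the minimum, over all vertices $v$ and pairs of distinct edges incident to $v$, of the angle they form at $v$. *)

theory Defs
  imports "HOL-Analysis.Analysis"
begin

definition vec_angle :: "real^3 \<Rightarrow> real^3 \<Rightarrow> real" where
  "vec_angle x y = arccos ((x \<bullet> y) / (norm x * norm y))"

definition simple_graph :: "'a set \<Rightarrow> ('a \<Rightarrow> 'a \<Rightarrow> bool) \<Rightarrow> bool" where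
  "simple_graph V E \<longleftrightarrow> finite V \<and> (\<forall>u v. E u v \<longrightarrow> u \<in> V \<and> v \<in> V)
     \<and> (\<forall>u v. E u v \<longrightarrow> E v u) \<and> (\<forall>v. \<not> E v v)"

definition degree :: "'a set \<Rightarrow> ('a \<Rightarrow> 'a \<Rightarrow> bool) \<Rightarrow> 'a \<Rightarrow> nat" where
  "degree V E v = card {u \<in> V. E v u}"

definition max_degree :: "'a set \<Rightarrow> ('a \<Rightarrow> 'a \<Rightarrow> bool) \<Rightarrow> nat" where
  "max_degree V E = Max (insert 0 (degree V E ` V))"

end

theory Submission
  imports Defs
begin

text \<open>Colour the vertices greedily with \<open>(d+1)\<^sup>2\<close> colours so that any two vertices with a
common neighbour get different colours, and place colour \<open>(i, j)\<close> at the grid point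
\<open>(i h, j h)\<close>, \<open>h = 1/(2(d+1))\<close>, of the cap \<open>x\<^sub>2, x\<^sub>3 \<in> [0, 1/2]\<close> of the unit sphere, lifted
by the first coordinate; a small vertex-dependent shift makes the placement injective.
Two edges \<open>vu\<close>, \<open>vw\<close> then end at points at distance at least \<open>h/2\<close>, and by the law of sines
the angle at \<open>v\<close> subtending a chord \<open>s\<close> of a circle of radius at most 1 has sine at least
\<open>s/2\<close>, hence is at least \<open>h/4 \<ge> 1/(16 d)\<close>.\<close>

lemma greedy_colouring:
  assumes fin: "finite V" and sym: "\<And>x y. R x y \<Longrightarrow> R y x" and irrefl: "\<And>x. \<not> R x x"
    and few: "\<And>x. x \<in> V \<Longrightarrow> card {y \<in> V. R x y} < card C"
  shows "\<exists>col. col ` V \<subseteq> C \<and> (\<forall>x\<in>V. \<forall>y\<in>V. R x y \<longrightarrow> col x \<noteq> col y)"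
  using fin subset_refl
proof (induction V rule: finite_subset_induct')
  case empty
  show ?case by simp
next
  case (insert a F)
  then obtain col where col: "col ` F \<subseteq> C" "\<forall>x\<in>F. \<forall>y\<in>F. R x y \<longrightarrow> col x \<noteq> col y"
    by blast
  define used where "used = col ` {y \<in> F. R a y}"
  have "card used \<le> card {y \<in> F. R a y}"
    unfolding used_def using insert.hyps(1) by (intro card_image_le) simp
  also have "\<dots> \<le> card {y \<in> V. R a y}"
    using insert.hyps(3) fin by (intro card_mono) auto
  also have "\<dots> < card C" using few insert.hyps(2) .
  finally have "card used < card C" .
  moreover have "finite used" unfolding used_def using insert.hyps(1) by simp
  ultimately have "\<not> C \<subseteq> used" by (meson card_mono leD)
  then obtain c where c: "c \<in> C" "c \<notin> used" by blast
  have "(col(a := c)) x \<noteq> (col(a := c)) y" if "x \<in> insert a F" "y \<in> insert a F" "R x y" for x y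
  proof -
    have "x \<noteq> y" using irrefl \<open>R x y\<close> by blast
    have "col y \<in> used" if "x = a" "y \<in> F" using \<open>R x y\<close> that unfolding used_def by blast
    moreover have "col x \<in> used" if "y = a" "x \<in> F" using sym[OF \<open>R x y\<close>] that unfolding used_def by blast
    ultimately show ?thesis using col(2) c(2) \<open>x \<noteq> y\<close> that by auto
  qed
  with col(1) c(1) show ?case by (intro exI[of _ "col(a := c)"]) auto
qed

definition shares_neighbour :: "('a \<Rightarrow> 'a \<Rightarrow> bool) \<Rightarrow> 'a \<Rightarrow> 'a \<Rightarrow> bool" where
  "shares_neighbour E u w \<longleftrightarrow> u \<noteq> w \<and> (\<exists>v. E v u \<and> E v w)"

lemma degree_le_max_degree: "finite V \<Longrightarrow> v \<in> V \<Longrightarrow> degree V E v \<le> max_degree V E"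
  unfolding max_degree_def by (intro Max_ge) auto

lemma card_shares_neighbour_le:
  assumes G: "simple_graph V E" and "u \<in> V"
  shows "card {w \<in> V. shares_neighbour E u w} \<le> max_degree V E ^ 2"
proof -
  let ?N = "\<lambda>v. {w \<in> V. E v w}"
  have fin: "finite V" using G by (simp add: simple_graph_def)
  have deg: "card (?N v) \<le> max_degree V E" if "v \<in> V" for v
    using degree_le_max_degree[OF fin that] by (simp add: degree_def)
  have "{w \<in> V. shares_neighbour E u w} \<subseteq> (\<Union>v\<in>?N u. ?N v)"
    using G unfolding shares_neighbour_def simple_graph_def by blast
  then have "card {w \<in> V. shares_neighbour E u w} \<le> card (\<Union>v\<in>?N u. ?N v)"
    using fin by (intro card_mono) auto
  also have "\<dots> \<le> (\<Sum>v\<in>?N u. card (?N v))"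
    using fin by (intro card_UN_le) auto
  also have "\<dots> \<le> card (?N u) * max_degree V E"
    using sum_bounded_above[of "?N u" "\<lambda>v. card (?N v)"] deg by auto
  also have "\<dots> \<le> max_degree V E ^ 2"
    using deg[OF \<open>u \<in> V\<close>] by (simp add: power2_eq_square)
  finally show ?thesis .
qed

lemma distance_two_colouring:
  assumes G: "simple_graph V E" and K: "max_degree V E < K"
  shows "\<exists>col. col ` V \<subseteq> {..<K} \<times> {..<K} \<and>
           (\<forall>u\<in>V. \<forall>w\<in>V. shares_neighbour E u w \<longrightarrow> col u \<noteq> col w)"
proof (rule greedy_colouring)
  show "finite V" using G by (simp add: simple_graph_def)
  show "card {w \<in> V. shares_neighbour E u w} < card ({..<K} \<times> {..<K})" if "u \<in> V" for u
    using le_less_trans[OF card_shares_neighbour_le[OF G that] power_strict_mono[OF K]]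
    by (simp add: card_cartesian_product power2_eq_square)
qed (auto simp: shares_neighbour_def)

lemma gram_determinant_real3:
  fixes u v w :: "real^3"
  shows "(u\<bullet>u)*(v\<bullet>v)*(w\<bullet>w) + 2*(u\<bullet>v)*(v\<bullet>w)*(u\<bullet>w)
           - (u\<bullet>u)*(v\<bullet>w)^2 - (v\<bullet>v)*(u\<bullet>w)^2 - (w\<bullet>w)*(u\<bullet>v)^2
         = (u$1*(v$2*w$3 - v$3*w$2) - u$2*(v$1*w$3 - v$3*w$1) + u$3*(v$1*w$2 - v$2*w$1))^2"
  unfolding inner_vec_def sum_3 by (simp add: power2_eq_square algebra_simps)

lemma vec_angle_ge_if_sin_ge:
  fixes x y :: "real^3"
  assumes "x \<noteq> 0" "y \<noteq> 0" "0 \<le> t" and sin_ge: "(x \<bullet> y)^2 \<le> (norm x * norm y)^2 * (1 - t^2)"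
  shows "t \<le> vec_angle x y"
proof -
  define C where "C = (x \<bullet> y) / (norm x * norm y)"
  have "C^2 \<le> 1 - t^2"
    using sin_ge assms(1,2) by (simp add: C_def power_divide divide_le_eq mult.commute)
  then have "t \<le> sqrt (1 - C^2)"
    using \<open>0 \<le> t\<close> by (simp add: real_le_rsqrt)
  also have "\<bar>C\<bar> \<le> 1"
    using Cauchy_Schwarz_ineq2[of x y] assms(1,2) by (simp add: C_def divide_le_eq abs_divide)
  then have "sqrt (1 - C^2) = sin (arccos C)"
    by (simp add: sin_arccos_abs)
  also have "\<dots> \<le> arccos C"
    using \<open>\<bar>C\<bar> \<le> 1\<close> by (intro sin_x_le_x) (simp add: arccos_lbound)
  finally show ?thesis by (simp add: vec_angle_def C_def)
qed

text \<open>The slack in this form of the law of sines is the Gram determinant of \<open>u, v, w\<close>.\<close>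

lemma inner_sq_le_chord:
  fixes u v w :: "real^3"
  assumes "norm u = 1" "norm v = 1" "norm w = 1"
  shows "((u - v) \<bullet> (w - v))^2 \<le> (norm (u - v) * norm (w - v))^2 * (1 - (norm (u - w) / 2)^2)"
proof -
  have uu: "u\<bullet>u = 1" and vv: "v\<bullet>v = 1" and ww: "w\<bullet>w = 1"
    using assms by (simp_all add: norm_eq_1)
  define x y z where "x = u\<bullet>v" and "y = v\<bullet>w" and "z = u\<bullet>w"
  have gram: "0 \<le> 1 + 2*x*y*z - y^2 - z^2 - x^2"
    using gram_determinant_real3[of u v w] unfolding uu vv ww x_def y_def z_def by simp
  have sides: "norm (u - v)^2 = 2 - 2*x" "norm (w - v)^2 = 2 - 2*y" "norm (u - w)^2 = 2 - 2*z"
    "(u - v) \<bullet> (w - v) = z - x - y + 1"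
    unfolding x_def y_def z_def power2_norm_eq_inner using uu vv ww
    by (simp_all add: inner_diff_left inner_diff_right inner_commute)
  have "(norm (u - v) * norm (w - v))^2 * (1 - (norm (u - w) / 2)^2) - ((u - v) \<bullet> (w - v))^2
      = 1 + 2*x*y*z - y^2 - z^2 - x^2"
    unfolding power_mult_distrib power_divide sides by (simp add: power2_eq_square field_simps)
  with gram show ?thesis by linarith
qed

lemma vec_angle_ge_half_chord:
  fixes u v w :: "real^3"
  assumes "norm u = 1" "norm v = 1" "norm w = 1" "u \<noteq> v" "w \<noteq> v"
  shows "norm (u - w) / 2 \<le> vec_angle (u - v) (w - v)"
  using assms by (intro vec_angle_ge_if_sin_ge inner_sq_le_chord) auto

definition cap_point :: "real \<Rightarrow> real \<Rightarrow> real^3" where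
  "cap_point s t = vector [sqrt (1 - s^2 - t^2), s, t]"

lemma cap_point_nth [simp]: "cap_point s t $ 2 = s" "cap_point s t $ 3 = t"
  unfolding cap_point_def by simp_all

lemma norm_cap_point: "s^2 + t^2 \<le> 1 \<Longrightarrow> norm (cap_point s t) = 1"
  unfolding norm_eq_1 cap_point_def inner_vec_def sum_3 by (simp add: power2_eq_square[symmetric])

lemma abs_diff_le_norm_cap_point:
  "\<bar>s - s'\<bar> \<le> norm (cap_point s t - cap_point s' t')"
  "\<bar>t - t'\<bar> \<le> norm (cap_point s t - cap_point s' t')"
  using component_le_norm_cart[of "cap_point s t - cap_point s' t'" 2]
    component_le_norm_cart[of "cap_point s t - cap_point s' t'" 3] by simp_all

definition grid_point :: "real \<Rightarrow> (nat \<Rightarrow> nat \<times> nat) \<Rightarrow> nat \<Rightarrow> real^3" where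
  "grid_point h col v = cap_point (real (fst (col v)) * h) (real (snd (col v)) * h + h / (4 * (real v + 2)))"

lemma grid_offset_bounds:
  assumes "h > 0"
  shows "0 \<le> h / (4 * (real v + 2))" "h / (4 * (real v + 2)) \<le> h / 8"
  using assms by (simp, intro divide_left_mono) auto

lemma norm_grid_point:
  assumes "col v \<in> {..<K} \<times> {..<K}" "h > 0" "real K * h \<le> 1/2"
  shows "norm (grid_point h col v) = 1"
proof -
  obtain i j where col: "col v = (i, j)" "i < K" "j < K" using assms(1) by auto
  have row: "real n * h \<le> 1/2 - h" if "n < K" for n
  proof -
    have "real n * h \<le> (real K - 1) * h" using that assms(2) by (intro mult_right_mono) auto
    with assms(3) show ?thesis by (simp add: algebra_simps)
  qed
  define s t where "s = real i * h" and "t = real j * h + h / (4 * (real v + 2))"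
  have "0 \<le> real i * h" "0 \<le> real j * h" using assms(2) by simp_all
  then have "0 \<le> s" "s \<le> 1/2" "0 \<le> t" "t \<le> 1/2"
    using row[OF col(2)] row[OF col(3)] grid_offset_bounds[OF assms(2), of v] assms(2)
    unfolding s_def t_def by linarith+
  then have "s * s \<le> 1/2 * (1/2)" "t * t \<le> 1/2 * (1/2)" by (intro mult_mono; simp)+
  then have "norm (cap_point s t) = 1" by (intro norm_cap_point) (simp add: power2_eq_square)
  then show ?thesis by (simp add: grid_point_def col s_def t_def)
qed

lemma grid_point_separated:
  assumes "h > 0" "col u \<noteq> col w"
  shows "h / 2 \<le> norm (grid_point h col u - grid_point h col w)"
proof -
  obtain i j i' j' where col: "col u = (i, j)" "col w = (i', j')" by (cases "col u", cases "col w")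
  have spacing: "h \<le> \<bar>real m * h - real n * h\<bar>" if "m \<noteq> n" for m n :: nat
  proof -
    have "1 \<le> \<bar>real m - real n\<bar>" using that by (cases "m < n") auto
    then have "1 * h \<le> \<bar>real m - real n\<bar> * h" using assms(1) by (intro mult_right_mono) auto
    also have "\<dots> = \<bar>real m * h - real n * h\<bar>"
      using assms(1) by (simp add: abs_mult flip: left_diff_distrib)
    finally show ?thesis by simp
  qed
  define s s' t t' where "s = real i * h" and "s' = real i' * h"
    and "t = real j * h + h / (4 * (real u + 2))" and "t' = real j' * h + h / (4 * (real w + 2))"
  have "h / 2 \<le> \<bar>s - s'\<bar> \<or> h / 2 \<le> \<bar>t - t'\<bar>"
  proof (cases "i = i'")
    case True
    then have "j \<noteq> j'" using assms(2) col by simp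
    then show ?thesis
      using spacing[of j j'] grid_offset_bounds[OF assms(1), of u] grid_offset_bounds[OF assms(1), of w]
      unfolding t_def t'_def by linarith
  next
    case False
    then show ?thesis using spacing[of i i'] assms(1) unfolding s_def s'_def by linarith
  qed
  then have "h / 2 \<le> norm (cap_point s t - cap_point s' t')"
    using abs_diff_le_norm_cap_point[where s=s and s'=s' and t=t and t'=t'] by linarith
  then show ?thesis by (simp add: grid_point_def col s_def s'_def t_def t'_def)
qed

lemma inj_grid_point:
  assumes "h > 0"
  shows "inj (grid_point h col)"
proof (rule injI)
  fix u w assume eq: "grid_point h col u = grid_point h col w"
  have "col u = col w"
  proof (rule ccontr)
    assume "col u \<noteq> col w"
    then have "h / 2 \<le> 0" using grid_point_separated[OF assms, of col u w] eq by simp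
    with assms show False by simp
  qed
  with arg_cong[OF eq, of "\<lambda>x. x $ 3"] show "u = w"
    using assms by (simp add: grid_point_def)
qed

lemma unit_sphere_drawing:
  fixes V :: "nat set"
  assumes G: "simple_graph V E" and d: "1 \<le> max_degree V E"
  shows "\<exists>p :: nat \<Rightarrow> real^3. inj_on p V \<and> (\<forall>v\<in>V. norm (p v) = 1) \<and>
           (\<forall>v u w. E v u \<longrightarrow> E v w \<longrightarrow> u \<noteq> w \<longrightarrow>
              1 / (16 * real (max_degree V E)) \<le> vec_angle (p u - p v) (p w - p v))"
proof -
  define K where "K = max_degree V E + 1"
  define h :: real where "h = 1 / (2 * real K)"
  obtain col where col: "col ` V \<subseteq> {..<K} \<times> {..<K}"
    "\<forall>u\<in>V. \<forall>w\<in>V. shares_neighbour E u w \<longrightarrow> col u \<noteq> col w"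
    using distance_two_colouring[OF G, of K] by (auto simp: K_def)
  have h: "h > 0" "real K * h \<le> 1/2" by (simp_all add: h_def K_def)
  let ?p = "grid_point h col"
  have unit: "norm (?p v) = 1" if "v \<in> V" for v
    using norm_grid_point[OF _ h] col(1) that by blast
  have "1 / (16 * real (max_degree V E)) \<le> vec_angle (?p u - ?p v) (?p w - ?p v)"
    if "E v u" "E v w" "u \<noteq> w" for u v w
  proof -
    have V: "u \<in> V" "v \<in> V" "w \<in> V" and "u \<noteq> v" "w \<noteq> v"
      using G that(1,2) by (auto simp: simple_graph_def)
    then have "?p u \<noteq> ?p v" "?p w \<noteq> ?p v" using inj_grid_point[OF h(1)] by (auto dest: injD)
    then have "norm (?p u - ?p w) / 2 \<le> vec_angle (?p u - ?p v) (?p w - ?p v)"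
      using unit V by (intro vec_angle_ge_half_chord) auto
    moreover have "col u \<noteq> col w" using col(2) V that by (auto simp: shares_neighbour_def)
    then have "h / 2 \<le> norm (?p u - ?p w)" by (rule grid_point_separated[OF h(1)])
    moreover have "1 / (16 * real (max_degree V E)) \<le> h / 4"
      using d by (simp add: h_def K_def field_simps)
    ultimately show ?thesis by linarith
  qed
  with unit show ?thesis
    using inj_on_subset[OF inj_grid_point[OF h(1), of col] subset_UNIV] by (intro exI[of _ ?p]) auto
qed

theorem theorem1:
  shows "\<exists>c::real. c > 0 \<and>
    (\<forall>(V::nat set) E. simple_graph V E \<longrightarrow> max_degree V E \<ge> 1 \<longrightarrow>
       (\<exists>p :: nat \<Rightarrow> real^3. inj_on p V \<and> (\<forall>v\<in>V. norm (p v) = 1) \<and>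
          (\<forall>v u w. E v u \<longrightarrow> E v w \<longrightarrow> u \<noteq> w \<longrightarrow>
             vec_angle (p u - p v) (p w - p v) \<ge> c / real (max_degree V E))))"
  using unit_sphere_drawing by (intro exI[of _ "1/16"]) auto

end
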